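(* Let $\Bbbk$ be a field of characteristic $0$, $n\ge2$, and let $(A,\mu,\alpha)$ be a multiplicative $n$-ary totally Hom-associative algebra over $\Bbbk$. Define $(2^k(n-1)+1)$-ary products $\mu^{(k)}$ inductively by $\mu^{(0)}=\mu$ and, for $k\ge1$, with $N_{k-1}=2^{k-1}(n-1)+1$ and $N_k=2^k(n-1)+1$, $\mu^{(k)}(a_1,\ldots,a_{N_k})=\mu^{(k-1)}\big(\mu^{(k-1)}(a_1,\ldots,a_{N_{k-1}}),\alpha^{2^{k-1}}(a_{N_{k-1}+1}),\ldots,\alpha^{2^{k-1}}(a_{N_k})\big)$. Then for each $k\ge0$, $A^k=(A,\mu^{(k)},\alpha^{2^k})$ (all twisting maps equal to $\alpha^{2^k}$) is a multiplicative $(2^k(n-1)+1)$-ary totally Hom-associative algebra.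
   Context: An $m$-ary Hom-algebra $(V,\mu,(\alpha_1,\ldots,\alpha_{m-1}))$ is a vector space $V$ with an $m$-linear map $\mu$ (written $\mu(a_1,\ldots,a_m)=(a_1\cdots a_m)$) and linear maps $\alpha_i\colon V\to V$. It is multiplicative if all $\alpha_i$ equal one map $\alpha$ and $\alpha\circ\mu=\mu\circ\alpha^{\otimes m}$. It is $m$-ary totally Hom-associative if for every $i\in\{1,\ldots,m-1\}$ and all $a_1,\ldots,a_{2m-1}$: $(\alpha_1(a_1),\ldots,\alpha_{i-1}(a_{i-1}),(a_i\cdots a_{i+m-1}),\alpha_i(a_{i+m}),\ldots,\alpha_{m-1}(a_{2m-1}))=(\alpha_1(a_1),\ldots,\alpha_i(a_i),(a_{i+1}\cdots a_{i+m}),\alpha_{i+1}(a_{i+m+1}),\ldots,\alpha_{m-1}(a_{2m-1}))$. *)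

theory Defs
  imports Main "HOL.Vector_Spaces"
begin

text \<open>An m-ary operation on V is modelled as a function on lists; only its values on
lists of length m matter.  Positions are 0-based.\<close>

definition multilinear ::
  "('k::field \<Rightarrow> 'v::ab_group_add \<Rightarrow> 'v) \<Rightarrow> nat \<Rightarrow> ('v list \<Rightarrow> 'v) \<Rightarrow> bool" where
  "multilinear scale m mu \<longleftrightarrow>
     (\<forall>xs i. length xs = m \<and> i < m \<longrightarrow> Vector_Spaces.linear scale scale (\<lambda>x. mu (xs[i := x])))"

definition nary_hom_algebra ::
  "('k::field \<Rightarrow> 'v::ab_group_add \<Rightarrow> 'v) \<Rightarrow> nat \<Rightarrow> ('v list \<Rightarrow> 'v) \<Rightarrow> ('v \<Rightarrow> 'v) \<Rightarrow> bool" where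
  "nary_hom_algebra scale m mu alpha \<longleftrightarrow> multilinear scale m mu \<and> Vector_Spaces.linear scale scale alpha"

definition hom_multiplicative :: "nat \<Rightarrow> ('v list \<Rightarrow> 'v) \<Rightarrow> ('v \<Rightarrow> 'v) \<Rightarrow> bool" where
  "hom_multiplicative m mu alpha \<longleftrightarrow>
     (\<forall>xs. length xs = m \<longrightarrow> alpha (mu xs) = mu (map alpha xs))"

text \<open>Total Hom-associativity (all alpha_i equal to alpha): for the paper's index
i \<in> {1..m-1} the identity compares bracketing at 0-based position i-1 and i.\<close>
definition bracket_at :: "nat \<Rightarrow> ('v list \<Rightarrow> 'v) \<Rightarrow> ('v \<Rightarrow> 'v) \<Rightarrow> nat \<Rightarrow> 'v list \<Rightarrow> 'v" where
  "bracket_at m mu alpha j xs =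
     mu (map alpha (take j xs) @ [mu (take m (drop j xs))] @ map alpha (drop (j + m) xs))"

definition totally_hom_assoc :: "nat \<Rightarrow> ('v list \<Rightarrow> 'v) \<Rightarrow> ('v \<Rightarrow> 'v) \<Rightarrow> bool" where
  "totally_hom_assoc m mu alpha \<longleftrightarrow>
     (\<forall>i xs. 1 \<le> i \<and> i \<le> m - 1 \<and> length xs = 2 * m - 1 \<longrightarrow>
        bracket_at m mu alpha (i - 1) xs = bracket_at m mu alpha i xs)"

definition arity_k :: "nat \<Rightarrow> nat \<Rightarrow> nat" where
  "arity_k n k = 2 ^ k * (n - 1) + 1"

fun mu_k :: "nat \<Rightarrow> ('v list \<Rightarrow> 'v) \<Rightarrow> ('v \<Rightarrow> 'v) \<Rightarrow> nat \<Rightarrow> 'v list \<Rightarrow> 'v" where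
  "mu_k n mu alpha 0 xs = mu xs"
| "mu_k n mu alpha (Suc k) xs =
     mu_k n mu alpha k
       (mu_k n mu alpha k (take (arity_k n k) xs)
        # map (alpha ^^ (2 ^ k)) (drop (arity_k n k) xs))"

end

theory Submission imports Defs begin

text \<open>The product of level \<open>k + 1\<close> arises from that of level \<open>k\<close> by one and the same
doubling construction: an \<open>m\<close>-ary \<open>f\<close> with twist \<open>a\<close> yields the \<open>(2m - 1)\<close>-ary product
\<open>f (f (x1, ..., xm), a x(m+1), ..., a x(2m-1))\<close> with twist \<open>a \<circ> a\<close>.  So it suffices to
show that doubling preserves multilinearity, multiplicativity and total Hom-associativity.
Total Hom-associativity of \<open>f\<close> says that every bracketing of two nested copies of \<open>f\<close>
equals the doubled product.  With this, a bracketing of two nested doubled products can be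
rearranged into a normal form that depends only on whether the inner factor starts in the
first or the second half; the two normal forms agree for the bracketing that starts exactly
at the boundary position \<open>m - 1\<close>.\<close>

definition doubled_product :: "nat \<Rightarrow> ('v list \<Rightarrow> 'v) \<Rightarrow> ('v \<Rightarrow> 'v) \<Rightarrow> 'v list \<Rightarrow> 'v" where
  "doubled_product m f a xs = f (f (take m xs) # map a (drop m xs))"

lemma split_list_at_length:
  assumes "length xs = k + l"
  obtains p q where "xs = p @ q" "length p = k" "length q = l"
proof
  show "xs = take k xs @ drop k xs" by simp
qed (use assms in auto)

lemma bracket_at_append:
  "length p = j \<Longrightarrow> length b = m \<Longrightarrow>
   bracket_at m f a j (p @ b @ s) = f (map a p @ [f b] @ map a s)"
  by (simp add: bracket_at_def)

lemma totally_hom_assoc_bracket_at_eq: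
  assumes "totally_hom_assoc m f a" and "j < m" and "length xs = 2 * m - 1"
  shows "bracket_at m f a j xs = doubled_product m f a xs"
  using assms(2)
proof (induction j)
  case 0
  then show ?case by (simp add: bracket_at_def doubled_product_def)
next
  case (Suc j)
  have "1 \<le> Suc j \<and> Suc j \<le> m - 1 \<and> length xs = 2 * m - 1"
    using Suc.prems assms(3) by simp
  then have "bracket_at m f a j xs = bracket_at m f a (Suc j) xs"
    using assms(1) unfolding totally_hom_assoc_def by (metis diff_Suc_1)
  with Suc show ?case by simp
qed

lemma totally_hom_assoc_reassoc:
  assumes "totally_hom_assoc m f a"
    and "length p < m" "length b = m" "length (p @ b @ s) = 2 * m - 1"
  shows "f (map a p @ [f b] @ map a s) = doubled_product m f a (p @ b @ s)"
  using totally_hom_assoc_bracket_at_eq[OF assms(1), of "length p" "p @ b @ s"]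
    bracket_at_append[of p "length p" b m f a s] assms(2-)
  by simp

text \<open>An inner doubled product occupying positions \<open>J\<close> to \<open>J + 2m - 2\<close> of an outer \<open>f\<close>
can be traded for one occupying positions \<open>0\<close> to \<open>2m - 2\<close>.\<close>

lemma totally_hom_assoc_doubled_product_interchange:
  assumes T: "totally_hom_assoc m f a" and m: "m \<ge> 2" and J: "J \<le> m - 1"
    and lengths: "length p = J" "length b = m" "length c = m - 1 - J" "length d = J"
      "length s = m - 1 - J"
  shows "f (map (a \<circ> a) p @ [doubled_product m f a (b @ c @ d)] @ map (a \<circ> a) s)
       = f (doubled_product m f a (p @ b @ c) # map (a \<circ> a) (d @ s))"
proof -
  have split_m: "m - J = Suc (m - Suc J)" using J m by simp
  have "f (map (a \<circ> a) p @ [doubled_product m f a (b @ c @ d)] @ map (a \<circ> a) s)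
      = f (map a (map a p) @ [f (f b # map a (c @ d))] @ map a (map a s))"
    using lengths by (simp add: doubled_product_def)
  also have "\<dots> = doubled_product m f a (map a p @ (f b # map a (c @ d)) @ map a s)"
    by (rule totally_hom_assoc_reassoc[OF T]) (use lengths m J in auto)
  also have "\<dots> = f (f (map a p @ [f b] @ map a c) # map (a \<circ> a) (d @ s))"
    using lengths J m by (simp add: doubled_product_def split_m)
  also have "f (map a p @ [f b] @ map a c) = doubled_product m f a (p @ b @ c)"
    by (rule totally_hom_assoc_reassoc[OF T]) (use lengths m J in auto)
  finally show ?thesis .
qed

lemma bracket_at_doubled_product_first_half:
  assumes T: "totally_hom_assoc m f a" and m: "m \<ge> 2"
    and ys: "length ys = 4 * m - 3" and J: "J \<le> m - 1"
  shows "bracket_at (2 * m - 1) (doubled_product m f a) (a \<circ> a) J ys =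
     f (f (doubled_product m f a (take (2 * m - 1) ys)
             # map (a \<circ> a) (take (m - 1) (drop (2 * m - 1) ys)))
        # map a (map (a \<circ> a) (drop (3 * m - 2) ys)))"
proof -
  have "length ys = J + (m + ((m-1-J) + (J + ((m-1-J) + (m-1)))))" using ys J m by simp
  then obtain p b c d s t where ys_eq: "ys = p @ (b @ c @ d) @ (s @ t)"
    and lengths: "length p = J" "length b = m" "length c = m-1-J" "length d = J"
      "length s = m-1-J" "length t = m-1"
    by (elim split_list_at_length) (metis append.assoc)
  have parts: "take (2 * m - 1) ys = p @ b @ c" "take (m - 1) (drop (2 * m - 1) ys) = d @ s"
      "drop (3 * m - 2) ys = t"
    unfolding ys_eq using lengths m J by simp_all
  have split_m: "m - J = Suc (m - Suc J)" using J m by simp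
  have "bracket_at (2 * m - 1) (doubled_product m f a) (a \<circ> a) J ys
      = doubled_product m f a
          (map (a \<circ> a) p @ [doubled_product m f a (b @ c @ d)] @ map (a \<circ> a) (s @ t))"
    unfolding ys_eq using lengths m J by (intro bracket_at_append) auto
  also have "\<dots> = f (f (map (a \<circ> a) p @ [doubled_product m f a (b @ c @ d)] @ map (a \<circ> a) s)
                    # map a (map (a \<circ> a) t))"
    unfolding doubled_product_def using lengths J m by (simp add: split_m)
  also have "f (map (a \<circ> a) p @ [doubled_product m f a (b @ c @ d)] @ map (a \<circ> a) s)
     = f (doubled_product m f a (p @ b @ c) # map (a \<circ> a) (d @ s))"
    by (rule totally_hom_assoc_doubled_product_interchange[OF T m J]) (use lengths in auto)
  finally show ?thesis unfolding parts .
qed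

lemma bracket_at_doubled_product_second_half:
  assumes T: "totally_hom_assoc m f a" and m: "m \<ge> 2"
    and ys: "length ys = 4 * m - 3" and J: "m - 1 \<le> J" "J \<le> 2 * m - 2"
  shows "bracket_at (2 * m - 1) (doubled_product m f a) (a \<circ> a) J ys =
     f (map a (map (a \<circ> a) (take (m - 1) ys)) @
        [f (doubled_product m f a (take (2 * m - 1) (drop (m - 1) ys))
            # map (a \<circ> a) (drop (3 * m - 2) ys))])"
proof -
  define K where "K = J - (m - 1)"
  have K: "K \<le> m - 1" "J = (m - 1) + K" using J m unfolding K_def by auto
  have "length ys = (m-1) + (K + (m + ((m-1-K) + (K + (m-1-K)))))" using ys K m by simp
  then obtain q p b c d s where ys_eq: "ys = (q @ p) @ (b @ c @ d) @ s"
    and lengths: "length q = m-1" "length p = K" "length b = m" "length c = m-1-K"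
      "length d = K" "length s = m-1-K"
    by (elim split_list_at_length) (metis append.assoc)
  have parts: "take (m - 1) ys = q" "take (2 * m - 1) (drop (m - 1) ys) = p @ b @ c"
      "drop (3 * m - 2) ys = d @ s"
    unfolding ys_eq using lengths m K by simp_all
  have "bracket_at (2 * m - 1) (doubled_product m f a) (a \<circ> a) J ys
      = doubled_product m f a
          (map (a \<circ> a) q @ (map (a \<circ> a) p @ [doubled_product m f a (b @ c @ d)]
             @ map (a \<circ> a) s) @ [])"
    unfolding ys_eq using lengths m K by (subst bracket_at_append) auto
  also have "\<dots> = f (map a (map (a \<circ> a) q) @
       [f (map (a \<circ> a) p @ [doubled_product m f a (b @ c @ d)] @ map (a \<circ> a) s)] @ map a [])"
    by (rule totally_hom_assoc_reassoc[OF T, symmetric]) (use lengths m K in auto)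
  also have "\<dots> = f (map a (map (a \<circ> a) q)
        @ [f (doubled_product m f a (p @ b @ c) # map (a \<circ> a) (d @ s))])"
    using totally_hom_assoc_doubled_product_interchange[OF T m K(1)] lengths by simp
  finally show ?thesis unfolding parts .
qed

lemma totally_hom_assoc_doubled_product:
  fixes f :: "'v list \<Rightarrow> 'v"
  assumes T: "totally_hom_assoc m f a" and m: "m \<ge> 2"
  shows "totally_hom_assoc (2 * m - 1) (doubled_product m f a) (a \<circ> a)"
  unfolding totally_hom_assoc_def
proof (intro allI impI)
  fix i and ys :: "'v list" assume H: "1 \<le> i \<and> i \<le> 2 * m - 1 - 1 \<and> length ys = 2 * (2 * m - 1) - 1"
  have ys: "length ys = 4 * m - 3" using H m by simp
  have leftmost: "bracket_at (2 * m - 1) (doubled_product m f a) (a \<circ> a) J ys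
      = bracket_at (2 * m - 1) (doubled_product m f a) (a \<circ> a) 0 ys"
    if "J \<le> 2 * m - 2" for J
  proof (cases "J \<le> m - 1")
    case True
    then show ?thesis
      using bracket_at_doubled_product_first_half[OF T m ys] by simp
  next
    case False
    then show ?thesis
      using bracket_at_doubled_product_second_half[OF T m ys _ that]
        bracket_at_doubled_product_second_half[OF T m ys, of "m - 1"]
        bracket_at_doubled_product_first_half[OF T m ys] by simp
  qed
  show "bracket_at (2 * m - 1) (doubled_product m f a) (a \<circ> a) (i - 1) ys
      = bracket_at (2 * m - 1) (doubled_product m f a) (a \<circ> a) i ys"
  proof -
    have "i - 1 \<le> 2 * m - 2" "i \<le> 2 * m - 2" using H by auto
    from leftmost[OF this(1)] leftmost[OF this(2)] show ?thesis by simp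
  qed
qed

lemma hom_multiplicative_doubled_product:
  fixes f :: "'v list \<Rightarrow> 'v"
  assumes M: "hom_multiplicative m f a" and m: "m \<ge> 1"
  shows "hom_multiplicative (2 * m - 1) (doubled_product m f a) (a \<circ> a)"
proof -
  have a_commutes: "a (doubled_product m f a ys) = doubled_product m f a (map a ys)"
    if "length ys = 2 * m - 1" for ys
    using M that m unfolding hom_multiplicative_def doubled_product_def
    by (simp add: take_map drop_map)
  show ?thesis
    unfolding hom_multiplicative_def
    using a_commutes by (simp del: map_map add: map_map[symmetric])
qed

lemma nary_hom_algebra_doubled_product:
  fixes f :: "'v::ab_group_add list \<Rightarrow> 'v"
  assumes N: "nary_hom_algebra scale m f a" and m: "m \<ge> 1"
  shows "nary_hom_algebra scale (2 * m - 1) (doubled_product m f a) (a \<circ> a)"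
proof -
  have lin_a: "Vector_Spaces.linear scale scale a"
    and lin_f: "\<And>ys j. length ys = m \<Longrightarrow> j < m \<Longrightarrow>
                 Vector_Spaces.linear scale scale (\<lambda>x. f (ys[j := x]))"
    using N unfolding nary_hom_algebra_def multilinear_def by auto
  have "multilinear scale (2 * m - 1) (doubled_product m f a)"
    unfolding multilinear_def
  proof (intro allI impI)
    fix xs :: "'v list" and i assume H: "length xs = 2 * m - 1 \<and> i < 2 * m - 1"
    let ?outer = "f (take m xs) # map a (drop m xs)"
    have outer_length: "length ?outer = m" using H m by simp
    show "Vector_Spaces.linear scale scale (\<lambda>x. doubled_product m f a (xs[i := x]))"
    proof (cases "i < m")
      case True
      have "(\<lambda>x. doubled_product m f a (xs[i := x]))
          = (\<lambda>y. f (?outer[0 := y])) \<circ> (\<lambda>x. f ((take m xs)[i := x]))"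
        using True by (auto simp: doubled_product_def take_update_swap)
      moreover have "Vector_Spaces.linear scale scale (\<lambda>x. f ((take m xs)[i := x]))"
        using True H by (intro lin_f) auto
      moreover have "Vector_Spaces.linear scale scale (\<lambda>y. f (?outer[0 := y]))"
        using outer_length m by (intro lin_f) auto
      ultimately show ?thesis by (simp add: Vector_Spaces.linear_compose)
    next
      case False
      have "(\<lambda>x. doubled_product m f a (xs[i := x])) = (\<lambda>y. f (?outer[Suc (i - m) := y])) \<circ> a"
        using False by (auto simp: doubled_product_def drop_update_swap map_update)
      moreover have "Vector_Spaces.linear scale scale (\<lambda>y. f (?outer[Suc (i - m) := y]))"
        using outer_length H False by (intro lin_f) auto
      ultimately show ?thesis using lin_a by (simp add: Vector_Spaces.linear_compose)
    qed
  qed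
  then show ?thesis
    using lin_a Vector_Spaces.linear_compose[OF lin_a lin_a] unfolding nary_hom_algebra_def by simp
qed

lemma mu_k_Suc_eq_doubled_product:
  "mu_k n mu alpha (Suc k) = doubled_product (arity_k n k) (mu_k n mu alpha k) (alpha ^^ 2 ^ k)"
  by (rule ext) (simp add: doubled_product_def)

lemma arity_k_Suc: "arity_k n (Suc k) = 2 * arity_k n k - 1"
  by (simp add: arity_k_def)

lemma arity_k_ge_2: "n \<ge> 2 \<Longrightarrow> arity_k n k \<ge> 2"
  by (simp add: arity_k_def)

lemma funpow_double: "f ^^ (2 * k) = f ^^ k \<circ> f ^^ k"
  by (simp add: funpow_add[symmetric] mult_2)

theorem corollary3p2:
  fixes scale :: "'k::field_char_0 \<Rightarrow> 'v::ab_group_add \<Rightarrow> 'v"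
    and mu :: "'v list \<Rightarrow> 'v" and alpha :: "'v \<Rightarrow> 'v" and n :: nat
  assumes "vector_space scale"
    and "n \<ge> 2"
    and "nary_hom_algebra scale n mu alpha"
    and "hom_multiplicative n mu alpha"
    and "totally_hom_assoc n mu alpha"
  shows "\<forall>k. nary_hom_algebra scale (arity_k n k) (mu_k n mu alpha k) (alpha ^^ (2 ^ k))
          \<and> hom_multiplicative (arity_k n k) (mu_k n mu alpha k) (alpha ^^ (2 ^ k))
          \<and> totally_hom_assoc (arity_k n k) (mu_k n mu alpha k) (alpha ^^ (2 ^ k))"
proof
  fix k
  show "nary_hom_algebra scale (arity_k n k) (mu_k n mu alpha k) (alpha ^^ (2 ^ k))
          \<and> hom_multiplicative (arity_k n k) (mu_k n mu alpha k) (alpha ^^ (2 ^ k))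
          \<and> totally_hom_assoc (arity_k n k) (mu_k n mu alpha k) (alpha ^^ (2 ^ k))"
  proof (induction k)
    case 0
    have "mu_k n mu alpha 0 = mu" "arity_k n 0 = n"
      using assms(2) by (auto simp: arity_k_def)
    then show ?case using assms by simp
  next
    case (Suc k)
    have "arity_k n k \<ge> 2" using assms(2) by (rule arity_k_ge_2)
    then show ?case
      unfolding arity_k_Suc mu_k_Suc_eq_doubled_product power_Suc funpow_double
      by (intro conjI nary_hom_algebra_doubled_product hom_multiplicative_doubled_product
          totally_hom_assoc_doubled_product) (use Suc.IH in auto)
  qed
qed

end
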